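(* Fix $N\ge 1$, positive real weights $\omega_1,\dots,\omega_N$, a complex vector $\bm{\alpha}=(\alpha_1,\dots,\alpha_N)\in\mathbb{C}^N$, and an integer $n\ge 1$. Let $\rho_{\bm a}$ be a state (density operator) on the signal modes $\bm a$ such that the expectations $\operatorname{tr}(\rho_{\bm a}\,M)$ are well-defined and finite for every polynomial $M$ of degree at most $n$ in the operators $\hat a_k,\hat a_k^\dagger$ ($k=1,\dots,N$). Let the joint state of signal and LO modes be $\rho=\rho_{\bm a}\otimes \bm 0_{\bm b}$. Then, as $\delta\to 0^+$, $$\langle \hat q_\delta^{\,n}\rangle_\rho=\langle \hat q^{\,n}\rangle_\rho+O(\delta^2),$$ where the constant implicit in $O(\delta^2)$ depends on $\rho_{\bm a}$ (and on $n$, $\bm\alpha$, $\bm\omega$) but not on $\delta$.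
   Context: Modes: $\hat a_1,\dots,\hat a_N$ (signal modes $\bm a$) and $\hat b_1,\dots,\hat b_N$ (local-oscillator modes $\bm b$, taken before the LO displacement) are $2N$ mutually orthogonal bosonic modes: $[\hat a_k,\hat a_l^\dagger]=[\hat b_k,\hat b_l^\dagger]=\delta_{kl}$, all other commutators between annihilation/creation operators vanish. The joint Hilbert space is the tensor product of the Fock spaces of the signal modes and LO modes; $\bm 0_{\bm b}$ denotes the vacuum state (density operator) of all LO modes. The target quadrature is $\hat q=\hat q_{\bm a,\bm\alpha}=\sum_{k=1}^N -i(\alpha_k\hat a_k^\dagger-\alpha_k^*\hat a_k)$ (acting on the signal modes). For $\delta>0$, set $\beta_k=-i\alpha_k/\omega_k$ and define the outgoing modes $\hat c_k=\frac1{\sqrt2}(\hat a_k+\hat b_k+\beta_k/\delta)$, $\hat d_k=\frac1{\sqrt2}(\hat a_k-\hat b_k-\beta_k/\delta)$. The broadband pulsed (BBP) homodyne measurement operator is the self-adjoint operator $\hat q_\delta=\delta\sum_{k=1}^N\omega_k(\hat c_k^\dagger\hat c_k-\hat d_k^\dagger\hat d_k)$ (a scaled difference of two commuting weighted total-photon-number/energy operators), which equals $\hat q+\delta\sum_{k=1}^N\omega_k(\hat a_k^\dagger\hat b_k+\hat b_k^\dagger\hat a_k)$. Also $\hat q_0:=\hat q$. $\langle X\rangle_\rho=\operatorname{tr}(\rho X)$. *)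

theory Defs
  imports "HOL-Analysis.Analysis" "HOL-Library.Landau_Symbols"
begin

text \<open>Concrete Fock-space model in the number (occupation) basis.
  Mode labels have type 'i; an occupation-number configuration is a function
  'i \<Rightarrow> nat; a vector (possibly non-normalizable, coordinates in the number
  basis) is a function (('i \<Rightarrow> nat) \<Rightarrow> complex).\<close>

type_synonym 'i vec = "('i \<Rightarrow> nat) \<Rightarrow> complex"
type_synonym 'i op = "'i vec \<Rightarrow> 'i vec"

definition lower :: "'i \<Rightarrow> 'i op" where
  "lower k \<psi> = (\<lambda>m. complex_of_real (sqrt (real (m k + 1))) * \<psi> (m(k := m k + 1)))"

definition raise :: "'i \<Rightarrow> 'i op" where
  "raise k \<psi> = (\<lambda>m. if m k = 0 then 0
                     else complex_of_real (sqrt (real (m k))) * \<psi> (m(k := m k - 1)))"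

definition basis :: "('i \<Rightarrow> nat) \<Rightarrow> 'i vec" where
  "basis m = (\<lambda>m'. if m' = m then 1 else 0)"

definition occ_sig :: "nat \<Rightarrow> (nat \<Rightarrow> nat) set" where
  "occ_sig N = {m. \<forall>k. k \<notin> {1..N} \<longrightarrow> m k = 0}"

text \<open>Joint modes: Inl k = signal mode a_k, Inr k = local-oscillator mode b_k.\<close>
definition occ_joint :: "nat \<Rightarrow> (nat + nat \<Rightarrow> nat) set" where
  "occ_joint N = {m. \<forall>k. k \<notin> {1..N} \<longrightarrow> m (Inl k) = 0 \<and> m (Inr k) = 0}"

text \<open>A density matrix (rho m m' = <m|rho|m'>) on the span of the basis B:
  hermitian, positive semidefinite, trace one.\<close>
definition density_matrix :: "('i \<Rightarrow> nat) set \<Rightarrow> (('i \<Rightarrow> nat) \<Rightarrow> ('i \<Rightarrow> nat) \<Rightarrow> complex) \<Rightarrow> bool" where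
  "density_matrix B \<rho> \<longleftrightarrow>
     (\<forall>m\<in>B. \<forall>m'\<in>B. \<rho> m m' = cnj (\<rho> m' m)) \<and>
     (\<forall>F x. finite F \<longrightarrow> F \<subseteq> B \<longrightarrow>
        0 \<le> Re (\<Sum>m\<in>F. \<Sum>m'\<in>F. cnj (x m) * \<rho> m m' * x m')) \<and>
     ((\<lambda>m. \<rho> m m) has_sum 1) B"

text \<open>Summand of tr(rho X) = sum_{m,m'} <m|rho|m'> <m'|X|m>.\<close>
definition tr_summand :: "(('i \<Rightarrow> nat) \<Rightarrow> ('i \<Rightarrow> nat) \<Rightarrow> complex) \<Rightarrow> 'i op \<Rightarrow> ('i \<Rightarrow> nat) \<times> ('i \<Rightarrow> nat) \<Rightarrow> complex" where
  "tr_summand \<rho> X = (\<lambda>(m, m'). \<rho> m m' * X (basis m) m')"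

definition expect :: "('i \<Rightarrow> nat) set \<Rightarrow> (('i \<Rightarrow> nat) \<Rightarrow> ('i \<Rightarrow> nat) \<Rightarrow> complex) \<Rightarrow> 'i op \<Rightarrow> complex" where
  "expect B \<rho> X = (\<Sum>\<^sub>\<infinity>p\<in>B \<times> B. tr_summand \<rho> X p)"

text \<open>Monomial (word) in the signal operators: (True,k) = a_k^dagger, (False,k) = a_k.\<close>
definition word_op :: "(bool \<times> 'i) list \<Rightarrow> 'i op" where
  "word_op w = foldr (\<lambda>(d, k) acc. (if d then raise k else lower k) \<circ> acc) w id"

text \<open>Joint state rho_a \<otimes> vacuum on the LO modes.\<close>
definition joint_state :: "((nat \<Rightarrow> nat) \<Rightarrow> (nat \<Rightarrow> nat) \<Rightarrow> complex) \<Rightarrow> (nat + nat \<Rightarrow> nat) \<Rightarrow> (nat + nat \<Rightarrow> nat) \<Rightarrow> complex" where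
  "joint_state \<rho>a m m' =
     (if (\<forall>k. m (Inr k) = 0 \<and> m' (Inr k) = 0) then \<rho>a (m \<circ> Inl) (m' \<circ> Inl) else 0)"

definition quad :: "nat \<Rightarrow> (nat \<Rightarrow> complex) \<Rightarrow> (nat + nat) op" where
  "quad N \<alpha> \<psi> = (\<lambda>m. \<Sum>k\<in>{1..N}.
      - \<i> * (\<alpha> k * raise (Inl k) \<psi> m - cnj (\<alpha> k) * lower (Inl k) \<psi> m))"

definition beta :: "(nat \<Rightarrow> complex) \<Rightarrow> (nat \<Rightarrow> real) \<Rightarrow> nat \<Rightarrow> complex" where
  "beta \<alpha> \<omega> k = - \<i> * \<alpha> k / complex_of_real (\<omega> k)"

text \<open>Outgoing modes c_k, d_k and their adjoints (sign s = 1 for c, -1 for d).\<close>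
definition out_lower :: "real \<Rightarrow> (nat \<Rightarrow> complex) \<Rightarrow> (nat \<Rightarrow> real) \<Rightarrow> real \<Rightarrow> nat \<Rightarrow> (nat + nat) op" where
  "out_lower s \<alpha> \<omega> \<delta> k \<psi> = (\<lambda>m. (lower (Inl k) \<psi> m
      + complex_of_real s * (lower (Inr k) \<psi> m + beta \<alpha> \<omega> k / complex_of_real \<delta> * \<psi> m))
      / complex_of_real (sqrt 2))"

definition out_raise :: "real \<Rightarrow> (nat \<Rightarrow> complex) \<Rightarrow> (nat \<Rightarrow> real) \<Rightarrow> real \<Rightarrow> nat \<Rightarrow> (nat + nat) op" where
  "out_raise s \<alpha> \<omega> \<delta> k \<psi> = (\<lambda>m. (raise (Inl k) \<psi> m
      + complex_of_real s * (raise (Inr k) \<psi> m + cnj (beta \<alpha> \<omega> k) / complex_of_real \<delta> * \<psi> m))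
      / complex_of_real (sqrt 2))"

definition quad_bbp :: "nat \<Rightarrow> (nat \<Rightarrow> complex) \<Rightarrow> (nat \<Rightarrow> real) \<Rightarrow> real \<Rightarrow> (nat + nat) op" where
  "quad_bbp N \<alpha> \<omega> \<delta> \<psi> = (\<lambda>m. complex_of_real \<delta> * (\<Sum>k\<in>{1..N}. complex_of_real (\<omega> k) *
      (out_raise 1 \<alpha> \<omega> \<delta> k (out_lower 1 \<alpha> \<omega> \<delta> k \<psi>) m
       - out_raise (-1) \<alpha> \<omega> \<delta> k (out_lower (-1) \<alpha> \<omega> \<delta> k \<psi>) m)))"

end

theory Submission
  imports Defs
begin

text \<open>Expanding \<open>q\<^sub>\<delta> = q + \<delta> \<Sum>\<^sub>k \<omega>\<^sub>k (a\<^sub>k\<^sup>\<dagger> b\<^sub>k + b\<^sub>k\<^sup>\<dagger> a\<^sub>k)\<close>, the power \<open>q\<^sub>\<delta>\<^sup>n\<close> becomes a finite linear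
  combination of operator words, each carrying the factor \<open>\<delta>\<^sup>d\<close> where \<open>d\<close> is the number of
  local-oscillator operators in the word.  In the product state \<open>\<rho>\<^sub>a \<otimes> 0\<^sub>b\<close> the expectation of
  a word factors into a signal expectation times the vacuum amplitude of its LO part.  The words
  with \<open>d = 0\<close> reproduce \<open>\<langle>q\<^sup>n\<rangle>\<close>, a single LO operator has vanishing vacuum amplitude, and all
  remaining words carry \<open>\<delta>\<^sup>d \<le> \<delta>\<^sup>2\<close> for \<open>\<delta> \<le> 1\<close>.\<close>

definition letter_op :: "bool \<times> 'i \<Rightarrow> 'i op" where
  "letter_op = (\<lambda>(d, k). if d then raise k else lower k)"

lemma word_op_Nil [simp]: "word_op [] = id"
  by (simp add: word_op_def)

lemma word_op_Cons [simp]: "word_op (x # w) = letter_op x \<circ> word_op w"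
  by (simp add: word_op_def letter_op_def split: prod.splits)

lemma word_op_append: "word_op (xs @ ys) = word_op xs \<circ> word_op ys"
  by (induction xs) auto

lemma word_op_sum:
  "word_op w (\<lambda>m. \<Sum>i\<in>I. c i * f i m) = (\<lambda>m. \<Sum>i\<in>I. c i * word_op w (f i) m)"
proof (induction w)
  case (Cons x w)
  have "letter_op x (\<lambda>m. \<Sum>i\<in>I. c i * f i m) = (\<lambda>m. \<Sum>i\<in>I. c i * letter_op x (f i) m)"
    for f
    by (auto simp: letter_op_def lower_def raise_def sum_distrib_left mult.left_commute
        fun_eq_iff split: prod.splits)
  then show ?case
    using Cons.IH by simp
qed simp

lemma letter_op_vacuum: "letter_op x (basis (\<lambda>_. 0)) (\<lambda>_. 0) = 0"
  by (auto simp: letter_op_def lower_def raise_def basis_def split: prod.splits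
      dest: fun_cong[where x = "snd x"])

definition word_comb :: "'t set \<Rightarrow> ('t \<Rightarrow> complex) \<Rightarrow> ('t \<Rightarrow> (bool \<times> 'i) list) \<Rightarrow> 'i op" where
  "word_comb T c w \<psi> = (\<lambda>m. \<Sum>t\<in>T. c t * word_op (w t) \<psi> m)"

definition lists_of_length :: "'t set \<Rightarrow> nat \<Rightarrow> 't list set" where
  "lists_of_length T n = {ts. set ts \<subseteq> T \<and> length ts = n}"

lemma finite_lists_of_length: "finite T \<Longrightarrow> finite (lists_of_length T n)"
  unfolding lists_of_length_def by (rule finite_lists_length_eq)

lemma sum_lists_of_length_Suc:
  "(\<Sum>ts\<in>lists_of_length T (Suc n). f ts) = (\<Sum>t\<in>T. \<Sum>ts\<in>lists_of_length T n. f (t # ts))"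
proof -
  have "lists_of_length T (Suc n) = (\<lambda>(t, ts). t # ts) ` (T \<times> lists_of_length T n)"
    by (auto simp: lists_of_length_def length_Suc_conv)
  moreover have "inj_on (\<lambda>(t, ts). t # ts) (T \<times> lists_of_length T n)"
    by (auto simp: inj_on_def)
  ultimately show ?thesis
    by (simp add: sum.reindex sum.cartesian_product split_def)
qed

lemma word_comb_power:
  "word_comb T c w ^^ n =
     word_comb (lists_of_length T n) (\<lambda>ts. prod_list (map c ts)) (\<lambda>ts. concat (map w ts))"
proof (induction n)
  case 0
  have "lists_of_length T 0 = {[]}"
    by (auto simp: lists_of_length_def)
  then show ?case
    by (simp add: word_comb_def fun_eq_iff)
next
  case (Suc n)
  show ?case
  proof (intro ext)
    fix \<psi> m
    have "(word_comb T c w ^^ Suc n) \<psi> m =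
        (\<Sum>t\<in>T. \<Sum>ts\<in>lists_of_length T n.
           c t * (prod_list (map c ts) * word_op (w t) (word_op (concat (map w ts)) \<psi>) m))"
      by (simp add: Suc.IH word_comb_def word_op_sum sum_distrib_left)
    then show "(word_comb T c w ^^ Suc n) \<psi> m = word_comb (lists_of_length T (Suc n))
        (\<lambda>ts. prod_list (map c ts)) (\<lambda>ts. concat (map w ts)) \<psi> m"
      by (simp add: word_comb_def sum_lists_of_length_Suc word_op_append mult.assoc)
  qed
qed

definition tensor_vec :: "'i vec \<Rightarrow> 'j vec \<Rightarrow> ('i + 'j) vec" where
  "tensor_vec \<phi> \<psi> = (\<lambda>M. \<phi> (M \<circ> Inl) * \<psi> (M \<circ> Inr))"

fun left_letters :: "(bool \<times> ('i + 'j)) list \<Rightarrow> (bool \<times> 'i) list" where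
  "left_letters [] = []"
| "left_letters ((d, Inl k) # w) = (d, k) # left_letters w"
| "left_letters ((d, Inr k) # w) = left_letters w"

fun right_letters :: "(bool \<times> ('i + 'j)) list \<Rightarrow> (bool \<times> 'j) list" where
  "right_letters [] = []"
| "right_letters ((d, Inl k) # w) = right_letters w"
| "right_letters ((d, Inr k) # w) = (d, k) # right_letters w"

lemma left_letters_append [simp]: "left_letters (xs @ ys) = left_letters xs @ left_letters ys"
  by (induction xs rule: left_letters.induct) auto

lemma right_letters_append [simp]: "right_letters (xs @ ys) = right_letters xs @ right_letters ys"
  by (induction xs rule: right_letters.induct) auto

lemma word_op_tensor_vec:
  "word_op w (tensor_vec \<phi> \<psi>) = tensor_vec (word_op (left_letters w) \<phi>) (word_op (right_letters w) \<psi>)"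
proof (induction w rule: left_letters.induct)
  case (2 d k w)
  have upd: "(M(Inl k := v)) \<circ> Inl = (M \<circ> Inl)(k := v)" "(M(Inl k := v)) \<circ> Inr = M \<circ> Inr"
    for M :: "_ + _ \<Rightarrow> nat" and v
    by (auto simp: fun_eq_iff)
  show ?case
    using 2 by (auto simp: upd letter_op_def tensor_vec_def lower_def raise_def fun_eq_iff)
next
  case (3 d k w)
  have upd: "(M(Inr k := v)) \<circ> Inl = M \<circ> Inl" "(M(Inr k := v)) \<circ> Inr = (M \<circ> Inr)(k := v)"
    for M :: "_ + _ \<Rightarrow> nat" and v
    by (auto simp: fun_eq_iff)
  show ?case
    using 3 by (auto simp: upd letter_op_def tensor_vec_def lower_def raise_def fun_eq_iff)
qed simp

lemma basis_eq_tensor_vec: "basis M = tensor_vec (basis (M \<circ> Inl)) (basis (M \<circ> Inr))"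
proof -
  have "M' = M \<longleftrightarrow> M' \<circ> Inl = M \<circ> Inl \<and> M' \<circ> Inr = M \<circ> Inr" for M' :: "_ + _ \<Rightarrow> nat"
    by (metis sum_comp_cases)
  then show ?thesis
    by (auto simp: basis_def tensor_vec_def)
qed

definition vacuum_amplitude :: "(bool \<times> 'i) list \<Rightarrow> complex" where
  "vacuum_amplitude w = word_op w (basis (\<lambda>_. 0)) (\<lambda>_. 0)"

lemma vacuum_amplitude_single: "length w = 1 \<Longrightarrow> vacuum_amplitude w = 0"
  by (auto simp: vacuum_amplitude_def length_Suc_conv letter_op_vacuum)

definition zero_right :: "('i \<Rightarrow> nat) \<Rightarrow> ('i + 'j \<Rightarrow> nat)" where
  "zero_right m = case_sum m (\<lambda>_. 0)"

lemma zero_right_comp [simp]: "zero_right m \<circ> Inl = m" "zero_right m \<circ> Inr = (\<lambda>_. 0)"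
  by (simp_all add: zero_right_def fun_eq_iff)

lemma zero_right_apply [simp]: "zero_right m (Inl k) = m k" "zero_right m (Inr k) = 0"
  by (simp_all add: zero_right_def)

lemma word_op_basis_zero_right:
  "word_op w (basis (zero_right m)) (zero_right m') =
     word_op (left_letters w) (basis m) m' * vacuum_amplitude (right_letters w)"
proof -
  have tensor: "basis (zero_right m) = tensor_vec (basis m) (basis (\<lambda>_. 0))"
    using basis_eq_tensor_vec[of "zero_right m"] by simp
  show ?thesis
    unfolding tensor word_op_tensor_vec by (simp add: tensor_vec_def vacuum_amplitude_def)
qed

lemma expect_joint_state:
  "expect (occ_joint N) (joint_state \<rho>a) X =
     (\<Sum>\<^sub>\<infinity>(m, m')\<in>occ_sig N \<times> occ_sig N. \<rho>a m m' * X (basis (zero_right m)) (zero_right m'))"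
proof -
  define h :: "(nat \<Rightarrow> nat) \<times> (nat \<Rightarrow> nat) \<Rightarrow> (nat + nat \<Rightarrow> nat) \<times> (nat + nat \<Rightarrow> nat)"
    where "h = map_prod zero_right zero_right"
  have "inj (zero_right :: (nat \<Rightarrow> nat) \<Rightarrow> (nat + nat \<Rightarrow> nat))"
    by (rule injI) (metis zero_right_comp(1))
  then have inj: "inj_on h (occ_sig N \<times> occ_sig N)"
    unfolding h_def by (intro map_prod_inj_on) (auto intro: inj_on_subset)
  have sub: "h ` (occ_sig N \<times> occ_sig N) \<subseteq> occ_joint N \<times> occ_joint N"
    by (auto simp: h_def occ_sig_def occ_joint_def)
  have "tr_summand (joint_state \<rho>a) X (M, M') = 0"
    if "(M, M') \<in> occ_joint N \<times> occ_joint N - h ` (occ_sig N \<times> occ_sig N)" for M M'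
  proof (rule ccontr)
    assume "tr_summand (joint_state \<rho>a) X (M, M') \<noteq> 0"
    then have "\<forall>k. M (Inr k) = 0 \<and> M' (Inr k) = 0"
      by (auto simp: tr_summand_def joint_state_def split: if_splits)
    then have "(M, M') = h (M \<circ> Inl, M' \<circ> Inl)"
      by (auto simp: h_def zero_right_def fun_eq_iff split: sum.splits)
    moreover have "(M \<circ> Inl, M' \<circ> Inl) \<in> occ_sig N \<times> occ_sig N"
      using that by (auto simp: occ_sig_def occ_joint_def)
    ultimately show False
      using that by blast
  qed
  then have "expect (occ_joint N) (joint_state \<rho>a) X =
      infsum (tr_summand (joint_state \<rho>a) X) (h ` (occ_sig N \<times> occ_sig N))"
    unfolding expect_def using sub by (intro infsum_cong_neutral) auto
  also have "\<dots> = infsum (tr_summand (joint_state \<rho>a) X \<circ> h) (occ_sig N \<times> occ_sig N)"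
    by (rule infsum_reindex[OF inj])
  also have "\<dots> = (\<Sum>\<^sub>\<infinity>(m, m')\<in>occ_sig N \<times> occ_sig N.
      \<rho>a m m' * X (basis (zero_right m)) (zero_right m'))"
    by (intro infsum_cong) (auto simp: h_def tr_summand_def joint_state_def)
  finally show ?thesis .
qed

lemma infsum_sum:
  fixes f :: "'t \<Rightarrow> 'a \<Rightarrow> 'b :: {topological_comm_monoid_add, t2_space}"
  assumes "finite I" "\<And>i. i \<in> I \<Longrightarrow> f i summable_on A"
  shows "(\<Sum>\<^sub>\<infinity>x\<in>A. \<Sum>i\<in>I. f i x) = (\<Sum>i\<in>I. infsum (f i) A)"
proof -
  have "((\<lambda>x. \<Sum>i\<in>I. f i x) has_sum (\<Sum>i\<in>I. infsum (f i) A)) A"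
    using assms by (induction I rule: finite_induct) (auto intro: has_sum_add)
  then show ?thesis
    by (rule infsumI)
qed

lemma expect_joint_state_word_comb:
  assumes "finite T"
    and "\<And>t. t \<in> T \<Longrightarrow> tr_summand \<rho>a (word_op (left_letters (w t))) summable_on occ_sig N \<times> occ_sig N"
  shows "expect (occ_joint N) (joint_state \<rho>a) (word_comb T c w) =
    (\<Sum>t\<in>T. c t * vacuum_amplitude (right_letters (w t)) *
       expect (occ_sig N) \<rho>a (word_op (left_letters (w t))))"
proof -
  define f where "f t p = c t * vacuum_amplitude (right_letters (w t)) *
    tr_summand \<rho>a (word_op (left_letters (w t))) p" for t p
  have "expect (occ_joint N) (joint_state \<rho>a) (word_comb T c w) =
      (\<Sum>\<^sub>\<infinity>p\<in>occ_sig N \<times> occ_sig N. \<Sum>t\<in>T. f t p)"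
    unfolding expect_joint_state
    by (intro infsum_cong) (auto simp: f_def word_comb_def word_op_basis_zero_right
        tr_summand_def sum_distrib_left mult_ac)
  also have "\<dots> = (\<Sum>t\<in>T. infsum (f t) (occ_sig N \<times> occ_sig N))"
    using assms by (intro infsum_sum) (auto simp: f_def intro: summable_on_cmult_right)
  also have "\<dots> = (\<Sum>t\<in>T. c t * vacuum_amplitude (right_letters (w t)) *
       expect (occ_sig N) \<rho>a (word_op (left_letters (w t))))"
    unfolding f_def expect_def by (subst infsum_cmult_right') (rule refl)
  finally show ?thesis .
qed

definition bbp_terms :: "nat \<Rightarrow> (nat \<times> nat) set" where
  "bbp_terms N = {1..N} \<times> {0, 1, 2, 3}"

definition bbp_word :: "nat \<times> nat \<Rightarrow> (bool \<times> (nat + nat)) list" where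
  "bbp_word = (\<lambda>(k, j). [[(True, Inl k)], [(False, Inl k)],
                          [(True, Inl k), (False, Inr k)], [(True, Inr k), (False, Inl k)]] ! j)"

definition bbp_amplitude :: "(nat \<Rightarrow> complex) \<Rightarrow> (nat \<Rightarrow> real) \<Rightarrow> nat \<times> nat \<Rightarrow> complex" where
  "bbp_amplitude \<alpha> \<omega> = (\<lambda>(k, j). [- \<i> * \<alpha> k, \<i> * cnj (\<alpha> k), \<omega> k, \<omega> k] ! j)"

definition bbp_expansion :: "nat \<Rightarrow> (nat \<Rightarrow> complex) \<Rightarrow> (nat \<Rightarrow> real) \<Rightarrow> real \<Rightarrow> (nat + nat) op" where
  "bbp_expansion N \<alpha> \<omega> \<delta> = word_comb (bbp_terms N)
     (\<lambda>t. of_real \<delta> ^ length (right_letters (bbp_word t)) * bbp_amplitude \<alpha> \<omega> t) bbp_word"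

lemma bbp_expansion_apply:
  "bbp_expansion N \<alpha> \<omega> \<delta> \<psi> m = (\<Sum>k\<in>{1..N}. \<Sum>j\<in>{0, 1, 2, 3}.
     of_real \<delta> ^ length (right_letters (bbp_word (k, j))) * bbp_amplitude \<alpha> \<omega> (k, j) *
     word_op (bbp_word (k, j)) \<psi> m)"
  unfolding bbp_expansion_def word_comb_def bbp_terms_def sum.cartesian_product
  by (rule sum.cong) auto

lemma quad_eq_bbp_expansion: "quad N \<alpha> = bbp_expansion N \<alpha> \<omega> 0"
  by (intro ext) (simp add: bbp_expansion_apply quad_def bbp_word_def bbp_amplitude_def
      letter_op_def algebra_simps)

lemma quad_bbp_eq_bbp_expansion:
  assumes "\<delta> \<noteq> 0" and "\<And>k. k \<in> {1..N} \<Longrightarrow> \<omega> k \<noteq> 0"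
  shows "quad_bbp N \<alpha> \<omega> \<delta> = bbp_expansion N \<alpha> \<omega> \<delta>"
proof (intro ext)
  fix \<psi> m
  have raise_comb: "raise k (\<lambda>m. (f m + s * (g m + c * h m)) / r) m0
      = (raise k f m0 + s * (raise k g m0 + c * raise k h m0)) / r" for k f s g c h r m0
    by (simp add: raise_def algebra_simps add_divide_distrib)
  have sqrt2: "inverse (complex_of_real (sqrt 2)) * inverse (complex_of_real (sqrt 2)) * 2 = 1"
  proof -
    have "complex_of_real (sqrt 2) * complex_of_real (sqrt 2) = 2"
      by (simp flip: of_real_mult)
    then show ?thesis
      by (simp add: field_simps)
  qed
  have delta_inv: "complex_of_real \<delta> * inverse (complex_of_real \<delta>) = 1"
    using assms(1) by simp
  have omega_inv: "complex_of_real (\<omega> k) * inverse (complex_of_real (\<omega> k)) = 1"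
    if "k \<in> {1..N}" for k
    using assms(2)[OF that] by simp
  show "quad_bbp N \<alpha> \<omega> \<delta> \<psi> m = bbp_expansion N \<alpha> \<omega> \<delta> \<psi> m"
    unfolding bbp_expansion_apply quad_bbp_def sum_distrib_left out_raise_def out_lower_def raise_comb
    apply (intro sum.cong refl)
    subgoal for k
      using omega_inv[of k]
      apply (simp add: bbp_word_def bbp_amplitude_def letter_op_def beta_def)
      apply (simp only: divide_inverse inverse_mult_distrib)
      using delta_inv sqrt2 by algebra
    done
qed

lemma left_letters_bbp_words:
  "set ts \<subseteq> bbp_terms N \<Longrightarrow>
     left_letters (concat (map bbp_word ts)) = map (\<lambda>(k, j). (j = 0 \<or> j = 2, k)) ts"
  by (induction ts) (auto simp: bbp_terms_def bbp_word_def)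

lemma prod_list_power_mult:
  fixes x :: "'a :: comm_monoid_mult"
  shows "(\<Prod>t\<leftarrow>ts. x ^ e t * a t) = x ^ (\<Sum>t\<leftarrow>ts. e t) * (\<Prod>t\<leftarrow>ts. a t)"
  by (induction ts) (simp_all add: power_add mult_ac)

lemma length_right_letters_concat:
  "length (right_letters (concat (map f ts))) = (\<Sum>t\<leftarrow>ts. length (right_letters (f t)))"
  by (induction ts) simp_all

definition bbp_moment ::
    "nat \<Rightarrow> (nat \<Rightarrow> complex) \<Rightarrow> (nat \<Rightarrow> real) \<Rightarrow> ((nat \<Rightarrow> nat) \<Rightarrow> (nat \<Rightarrow> nat) \<Rightarrow> complex)
      \<Rightarrow> (nat \<times> nat) list \<Rightarrow> complex" where
  "bbp_moment N \<alpha> \<omega> \<rho>a ts = (\<Prod>t\<leftarrow>ts. bbp_amplitude \<alpha> \<omega> t) *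
     vacuum_amplitude (right_letters (concat (map bbp_word ts))) *
     expect (occ_sig N) \<rho>a (word_op (left_letters (concat (map bbp_word ts))))"

lemma expect_bbp_expansion_power:
  assumes "\<forall>w. length w \<le> n \<longrightarrow> (\<forall>(d, k)\<in>set w. k \<in> {1..N}) \<longrightarrow>
             tr_summand \<rho>a (word_op w) summable_on (occ_sig N \<times> occ_sig N)"
  shows "expect (occ_joint N) (joint_state \<rho>a) (bbp_expansion N \<alpha> \<omega> \<delta> ^^ n) =
    (\<Sum>ts\<in>lists_of_length (bbp_terms N) n.
       of_real \<delta> ^ length (right_letters (concat (map bbp_word ts))) * bbp_moment N \<alpha> \<omega> \<rho>a ts)"
proof -
  have "tr_summand \<rho>a (word_op (left_letters (concat (map bbp_word ts))))
          summable_on occ_sig N \<times> occ_sig N"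
    if "ts \<in> lists_of_length (bbp_terms N) n" for ts
  proof -
    from that have ts: "set ts \<subseteq> bbp_terms N" "length ts = n"
      by (simp_all add: lists_of_length_def)
    then have "\<forall>(d, k)\<in>set (map (\<lambda>(k, j). (j = 0 \<or> j = 2, k)) ts). k \<in> {1..N}"
      by (auto simp: bbp_terms_def)
    with ts show ?thesis
      using assms by (simp add: left_letters_bbp_words)
  qed
  then show ?thesis
    unfolding bbp_expansion_def word_comb_power prod_list_power_mult
    by (simp add: expect_joint_state_word_comb finite_lists_of_length bbp_terms_def
        length_right_letters_concat bbp_moment_def mult_ac)
qed

lemma norm_power_diff_zero_le:
  fixes \<delta> :: real and K :: complex
  assumes "0 < \<delta>" "\<delta> \<le> 1" and "d = 1 \<Longrightarrow> K = 0"
  shows "norm ((of_real \<delta> ^ d - 0 ^ d) * K) \<le> \<delta>\<^sup>2 * norm K"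
proof (cases "d \<ge> 2")
  case True
  then have "norm ((of_real \<delta> ^ d - 0 ^ d) * K) = \<delta> ^ d * norm K"
    using assms(1) by (simp add: norm_mult norm_power power_0_left)
  also have "\<dots> \<le> \<delta>\<^sup>2 * norm K"
    using True assms(1,2) by (intro mult_right_mono power_decreasing) auto
  finally show ?thesis .
next
  case False
  then have "d = 0 \<or> d = 1"
    by linarith
  then show ?thesis
    using assms(3) by auto
qed

lemma norm_expect_quad_bbp_power_diff_le:
  assumes "0 < \<delta>" "\<delta> \<le> 1" and "\<forall>k\<in>{1..N}. \<omega> k > 0"
    and "\<forall>w. length w \<le> n \<longrightarrow> (\<forall>(d, k)\<in>set w. k \<in> {1..N}) \<longrightarrow>
           tr_summand \<rho>a (word_op w) summable_on (occ_sig N \<times> occ_sig N)"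
  shows "norm (expect (occ_joint N) (joint_state \<rho>a) (quad_bbp N \<alpha> \<omega> \<delta> ^^ n)
           - expect (occ_joint N) (joint_state \<rho>a) (quad N \<alpha> ^^ n))
         \<le> \<delta>\<^sup>2 * (\<Sum>ts\<in>lists_of_length (bbp_terms N) n. norm (bbp_moment N \<alpha> \<omega> \<rho>a ts))"
proof -
  let ?d = "\<lambda>ts. length (right_letters (concat (map bbp_word ts)))"
  have bbp: "quad_bbp N \<alpha> \<omega> \<delta> = bbp_expansion N \<alpha> \<omega> \<delta>"
    using assms(1,3) by (intro quad_bbp_eq_bbp_expansion) force+
  have "expect (occ_joint N) (joint_state \<rho>a) (quad_bbp N \<alpha> \<omega> \<delta> ^^ n)
      - expect (occ_joint N) (joint_state \<rho>a) (quad N \<alpha> ^^ n)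
      = (\<Sum>ts\<in>lists_of_length (bbp_terms N) n.
           (of_real \<delta> ^ ?d ts - 0 ^ ?d ts) * bbp_moment N \<alpha> \<omega> \<rho>a ts)"
    by (simp add: bbp quad_eq_bbp_expansion[of N \<alpha> \<omega>]
        expect_bbp_expansion_power[OF assms(4)] sum_subtractf left_diff_distrib)
  also have "norm \<dots> \<le> (\<Sum>ts\<in>lists_of_length (bbp_terms N) n. \<delta>\<^sup>2 * norm (bbp_moment N \<alpha> \<omega> \<rho>a ts))"
    using assms(1,2) by (intro sum_norm_le norm_power_diff_zero_le)
      (auto simp: bbp_moment_def vacuum_amplitude_single)
  finally show ?thesis
    by (simp add: sum_distrib_left)
qed

theorem theorem1:
  fixes N n :: nat and \<omega> :: "nat \<Rightarrow> real" and \<alpha> :: "nat \<Rightarrow> complex"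
    and \<rho>a :: "(nat \<Rightarrow> nat) \<Rightarrow> (nat \<Rightarrow> nat) \<Rightarrow> complex"
  assumes "N \<ge> 1" and "n \<ge> 1"
    and "\<forall>k\<in>{1..N}. \<omega> k > 0"
    and "density_matrix (occ_sig N) \<rho>a"
    and "\<forall>w. length w \<le> n \<longrightarrow> (\<forall>(d, k)\<in>set w. k \<in> {1..N}) \<longrightarrow>
           tr_summand \<rho>a (word_op w) summable_on (occ_sig N \<times> occ_sig N)"
  shows "(\<lambda>\<delta>. cmod (expect (occ_joint N) (joint_state \<rho>a) (quad_bbp N \<alpha> \<omega> \<delta> ^^ n)
                  - expect (occ_joint N) (joint_state \<rho>a) (quad N \<alpha> ^^ n)))
         \<in> O[at_right 0](\<lambda>\<delta>. \<delta> ^ 2)"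
proof (rule bigoI)
  show "\<forall>\<^sub>F \<delta> in at_right 0.
      norm (cmod (expect (occ_joint N) (joint_state \<rho>a) (quad_bbp N \<alpha> \<omega> \<delta> ^^ n)
        - expect (occ_joint N) (joint_state \<rho>a) (quad N \<alpha> ^^ n)))
      \<le> (\<Sum>ts\<in>lists_of_length (bbp_terms N) n. norm (bbp_moment N \<alpha> \<omega> \<rho>a ts)) * norm (\<delta> ^ 2)"
    using eventually_at_right_real[OF zero_less_one]
    by (rule eventually_mono)
      (use norm_expect_quad_bbp_power_diff_le[OF _ _ assms(3,5)] in \<open>simp add: mult.commute\<close>)
qed

end
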